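(* Let $\alpha=[a_0;a_1,a_2,\dots]$ be irrational with convergents $p_k/q_k$, and let $N=\sum_{k=0}^{K-1} b_k q_k$ be the Ostrowski expansion of a non-negative integer. For any $k \ge 0$ such that $b_k \ge 1$, \[ -1 < -q_k \| q_k \alpha \| + q_k \| q_{k+1} \alpha \| \le \varepsilon_k (N) \le q_k \| q_{k+1} \alpha \| < \frac{1}{2} . \] If $b_{k+1} \le (1-\delta ) a_{k+2}$ with some $\delta >0$, then $\varepsilon_k (N) \ge -(1-\delta /3) q_k \| q_k \alpha \|$. If moreover $\frac{\log a_j}{a_{j+1}}\le T$ for all $j\ge k_0$ with constants $k_0,T\ge1$, then $\varepsilon_k (N) \ge -\left(1-\frac{1}{e^T+2}\right)$ for any $k \ge k_0$ such that $b_k \ge 1$.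
   Context: $p_k/q_k=[a_0;a_1,\dots,a_k]$, with $q_0=1,q_1=a_1$, $q_{k+1}=a_{k+1}q_k+q_{k-1}$. $\|y\|$ denotes distance to the nearest integer. The Ostrowski expansion of $N\ge0$ is the unique representation $N=\sum_{k=0}^{K-1}b_kq_k$ with integers $0\le b_0<a_1$, $0\le b_k\le a_{k+1}$, and $b_{k-1}=0$ whenever $b_k=a_{k+1}$ (coefficients $b_k$ with $k\ge K$ are $0$). For such $N$, $\varepsilon_k(N):=q_k\sum_{\ell=k+1}^{K-1}(-1)^{k+\ell}b_\ell\|q_\ell\alpha\|$. *)

theory Defs
  imports Complex_Main
begin

text \<open>Complete quotients of the (regular) continued fraction of alpha:
  r_0 = alpha, r_(n+1) = 1 / frac r_n.  For irrational alpha, frac r_n is never 0.\<close>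
primrec cf_rem :: "real \<Rightarrow> nat \<Rightarrow> real" where
  "cf_rem \<alpha> 0 = \<alpha>"
| "cf_rem \<alpha> (Suc n) = 1 / frac (cf_rem \<alpha> n)"

definition cf_a :: "real \<Rightarrow> nat \<Rightarrow> int" where
  "cf_a \<alpha> n = \<lfloor>cf_rem \<alpha> n\<rfloor>"

fun cf_q :: "real \<Rightarrow> nat \<Rightarrow> int" where
  "cf_q \<alpha> 0 = 1"
| "cf_q \<alpha> (Suc 0) = cf_a \<alpha> 1"
| "cf_q \<alpha> (Suc (Suc n)) = cf_a \<alpha> (n + 2) * cf_q \<alpha> (Suc n) + cf_q \<alpha> n"

definition dist_nint :: "real \<Rightarrow> real" where
  "dist_nint y = \<bar>y - of_int (round y)\<bar>"

definition ostrowski :: "real \<Rightarrow> nat \<Rightarrow> (nat \<Rightarrow> nat) \<Rightarrow> nat \<Rightarrow> bool" where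
  "ostrowski \<alpha> N b K \<longleftrightarrow>
     (\<forall>k\<ge>K. b k = 0) \<and>
     int (b 0) < cf_a \<alpha> 1 \<and>
     (\<forall>k. int (b k) \<le> cf_a \<alpha> (k + 1)) \<and>
     (\<forall>k. int (b (Suc k)) = cf_a \<alpha> (k + 2) \<longrightarrow> b k = 0) \<and>
     int N = (\<Sum>k<K. int (b k) * cf_q \<alpha> k)"

definition ost_eps :: "real \<Rightarrow> (nat \<Rightarrow> nat) \<Rightarrow> nat \<Rightarrow> nat \<Rightarrow> real" where
  "ost_eps \<alpha> b K k = real_of_int (cf_q \<alpha> k) *
     (\<Sum>l\<in>{k+1..<K}. (-1) ^ (k + l) * real (b l) * dist_nint (real_of_int (cf_q \<alpha> l) * \<alpha>))"

end

theory Submission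
  imports Defs
begin

text \<open>
  Let delta_n = |q_n \<alpha> - p_n|, the product of the fractional parts of the complete quotients
  r_0, ..., r_n (\<open>cf_delta\<close>). It satisfies delta_n = a_(n+2) delta_(n+1) + delta_(n+2) and
  q_(n+1) delta_n + q_n delta_(n+1) = 1, so it equals \<parallel>q_n \<alpha>\<parallel> once q_(n+1) \<ge> 2. Hence
  eps_k(N) = - q_k T_(k+1) for the alternating tail T_m = \<Sum>_(l\<ge>m) (-1)^(l-m) b_l delta_l
  (\<open>ost_tail\<close>). From T_m = b_m delta_m - T_(m+1) and b_m \<le> a_(m+1), downward induction gives
  -delta_m \<le> T_m \<le> delta_(m-1), and one more step gives
  T_(k+1) \<le> delta_k - (a_(k+2) - b_(k+1)) delta_(k+1), where the gap a_(k+2) - b_(k+1) is at least 1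
  by the Ostrowski condition when b_k \<ge> 1. All bounds follow from this and the two identities;
  for the last one, q_k delta_k < 1/2 unless a_(k+1) = 1, and then a_k \<le> e^T yields
  q_k \<le> (e^T + 1) q_(k-1), which together with (q_k + q_(k-1)) delta_k < 1 gives
  q_k delta_k < 1 - 1/(e^T + 2).
\<close>

declare cf_rem.simps(2) [simp del]

lemma cf_rem_not_rational:
  assumes "\<alpha> \<notin> \<rat>"
  shows "cf_rem \<alpha> n \<notin> \<rat>"
proof (induction n)
  case 0
  then show ?case using assms by simp
next
  case (Suc n)
  have "frac (cf_rem \<alpha> n) \<notin> \<rat>"
  proof
    assume "frac (cf_rem \<alpha> n) \<in> \<rat>"
    then have "frac (cf_rem \<alpha> n) + of_int \<lfloor>cf_rem \<alpha> n\<rfloor> \<in> \<rat>" by simp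
    with Suc show False by (simp add: frac_def)
  qed
  then show ?case by (simp add: cf_rem.simps(2) divide_inverse)
qed

lemma frac_cf_rem_pos:
  assumes "\<alpha> \<notin> \<rat>"
  shows "0 < frac (cf_rem \<alpha> n)"
proof -
  have "cf_rem \<alpha> n \<notin> \<int>" using cf_rem_not_rational[OF assms] Ints_subset_Rats by blast
  then show ?thesis by (metis frac_eq_0_iff frac_ge_0 less_le)
qed

lemma cf_rem_Suc_mult_frac:
  assumes "\<alpha> \<notin> \<rat>"
  shows "cf_rem \<alpha> (Suc n) * frac (cf_rem \<alpha> n) = 1"
  using frac_cf_rem_pos[OF assms, of n] by (simp add: cf_rem.simps(2))

lemma frac_cf_rem: "frac (cf_rem \<alpha> n) = cf_rem \<alpha> n - cf_a \<alpha> n"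
  by (simp add: frac_def cf_a_def)

lemma cf_a_Suc_ge_1:
  assumes "\<alpha> \<notin> \<rat>"
  shows "1 \<le> cf_a \<alpha> (Suc n)"
proof -
  have "1 < cf_rem \<alpha> (Suc n)"
    using frac_cf_rem_pos[OF assms, of n] frac_lt_1[of "cf_rem \<alpha> n"]
    by (simp add: cf_rem.simps(2))
  then show ?thesis unfolding cf_a_def by linarith
qed

lemma cf_q_ge_1:
  assumes "\<alpha> \<notin> \<rat>"
  shows "1 \<le> cf_q \<alpha> n"
  using assms
proof (induction \<alpha> n rule: cf_q.induct)
  case (3 \<alpha> n)
  then have "1 \<le> cf_q \<alpha> (Suc n)" "1 \<le> cf_q \<alpha> n" by auto
  moreover from this(1) have "cf_q \<alpha> (Suc n) \<le> cf_a \<alpha> (n + 2) * cf_q \<alpha> (Suc n)"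
    using cf_a_Suc_ge_1[OF "3.prems", of "Suc n"] by (simp add: mult_le_cancel_right1)
  ultimately show ?case unfolding cf_q.simps(3) by linarith
qed (auto intro: cf_a_Suc_ge_1)

lemma cf_q_Suc_Suc_ge:
  assumes "\<alpha> \<notin> \<rat>"
  shows "cf_q \<alpha> (Suc n) + cf_q \<alpha> n \<le> cf_q \<alpha> (Suc (Suc n))"
proof -
  have "cf_q \<alpha> (Suc n) \<le> cf_a \<alpha> (n + 2) * cf_q \<alpha> (Suc n)"
    using cf_a_Suc_ge_1[OF assms, of "Suc n"] cf_q_ge_1[OF assms, of "Suc n"]
    by (simp add: mult_le_cancel_right1)
  then show ?thesis unfolding cf_q.simps(3) by linarith
qed

lemma cf_q_Suc_Suc_ge_2:
  assumes "\<alpha> \<notin> \<rat>"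
  shows "2 \<le> cf_q \<alpha> (Suc (Suc n))"
  using cf_q_Suc_Suc_ge[OF assms, of n] cf_q_ge_1[OF assms, of n] cf_q_ge_1[OF assms, of "Suc n"]
  by linarith

lemma cf_q_mono_Suc:
  assumes "\<alpha> \<notin> \<rat>"
  shows "cf_q \<alpha> n \<le> cf_q \<alpha> (Suc n)"
proof (cases n)
  case 0
  then show ?thesis using cf_a_Suc_ge_1[OF assms, of 0] by simp
next
  case (Suc m)
  then show ?thesis using cf_q_Suc_Suc_ge[OF assms, of m] cf_q_ge_1[OF assms, of m] by simp
qed

lemma cf_q_Suc_le:
  assumes "\<alpha> \<notin> \<rat>"
  shows "cf_q \<alpha> (Suc n) \<le> (cf_a \<alpha> (Suc n) + 1) * cf_q \<alpha> n"
proof (cases n)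
  case (Suc m)
  then show ?thesis using cf_q_mono_Suc[OF assms, of m] by (simp add: algebra_simps)
qed simp

definition cf_delta :: "real \<Rightarrow> nat \<Rightarrow> real" where
  "cf_delta \<alpha> n = (\<Prod>i\<le>n. frac (cf_rem \<alpha> i))"

lemma cf_delta_0: "cf_delta \<alpha> 0 = frac \<alpha>"
  by (simp add: cf_delta_def)

lemma cf_delta_Suc: "cf_delta \<alpha> (Suc n) = cf_delta \<alpha> n * frac (cf_rem \<alpha> (Suc n))"
  by (simp add: cf_delta_def)

lemma cf_delta_pos:
  assumes "\<alpha> \<notin> \<rat>"
  shows "0 < cf_delta \<alpha> n"
  unfolding cf_delta_def using frac_cf_rem_pos[OF assms] by (simp add: prod_pos)

lemma cf_delta_Suc_less:
  assumes "\<alpha> \<notin> \<rat>"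
  shows "cf_delta \<alpha> (Suc n) < cf_delta \<alpha> n"
  using cf_delta_pos[OF assms, of n] frac_lt_1[of "cf_rem \<alpha> (Suc n)"] by (simp add: cf_delta_Suc)

lemma cf_delta_1:
  assumes "\<alpha> \<notin> \<rat>"
  shows "cf_delta \<alpha> 1 = 1 - cf_a \<alpha> 1 * cf_delta \<alpha> 0"
proof -
  have "cf_rem \<alpha> 1 * cf_delta \<alpha> 0 = 1"
    using cf_rem_Suc_mult_frac[OF assms, of 0] by (simp add: cf_delta_0)
  have "cf_delta \<alpha> 1 = cf_delta \<alpha> 0 * (cf_rem \<alpha> 1 - cf_a \<alpha> 1)"
    using cf_delta_Suc[of \<alpha> 0] frac_cf_rem[of \<alpha> 1] by simp
  with \<open>cf_rem \<alpha> 1 * cf_delta \<alpha> 0 = 1\<close> show ?thesis by (simp add: algebra_simps)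
qed

lemma cf_delta_rec:
  assumes "\<alpha> \<notin> \<rat>"
  shows "cf_delta \<alpha> n = cf_a \<alpha> (n + 2) * cf_delta \<alpha> (n + 1) + cf_delta \<alpha> (n + 2)"
proof -
  have "cf_delta \<alpha> (n + 2)
      = cf_delta \<alpha> n * frac (cf_rem \<alpha> (n + 1)) * (cf_rem \<alpha> (n + 2) - cf_a \<alpha> (n + 2))"
    using frac_cf_rem[of \<alpha> "n + 2"] by (simp add: cf_delta_Suc numeral_2_eq_2)
  also have "\<dots> = cf_delta \<alpha> n - cf_a \<alpha> (n + 2) * cf_delta \<alpha> (n + 1)"
    using cf_rem_Suc_mult_frac[OF assms, of "Suc n"]
    by (simp add: cf_delta_Suc numeral_2_eq_2 algebra_simps)
  finally show ?thesis by simp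
qed

lemma cf_q_delta_identity:
  assumes "\<alpha> \<notin> \<rat>"
  shows "cf_q \<alpha> (Suc n) * cf_delta \<alpha> n + cf_q \<alpha> n * cf_delta \<alpha> (Suc n) = 1"
proof (induction n)
  case 0
  then show ?case using cf_delta_1[OF assms] by simp
next
  case (Suc n)
  then show ?case using cf_delta_rec[OF assms, of n] by (simp add: algebra_simps)
qed

lemma cf_q_mult_sub_delta_Ints:
  assumes "\<alpha> \<notin> \<rat>"
  shows "of_int (cf_q \<alpha> n) * \<alpha> - (-1) ^ n * cf_delta \<alpha> n \<in> \<int>"
  using assms
proof (induction \<alpha> n rule: cf_q.induct)
  case (1 \<alpha>)
  then show ?case by (simp add: cf_delta_0 frac_def)
next
  case (2 \<alpha>)
  have "of_int (cf_q \<alpha> 1) * \<alpha> + cf_delta \<alpha> 1 = of_int (cf_a \<alpha> 1) * (\<alpha> - frac \<alpha>) + 1"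
    using cf_delta_1[OF "2.prems"] by (simp add: cf_delta_0 algebra_simps)
  then show ?case by (simp add: frac_def)
next
  case (3 \<alpha> n)
  have "of_int (cf_q \<alpha> (Suc (Suc n))) * \<alpha> - (-1) ^ Suc (Suc n) * cf_delta \<alpha> (Suc (Suc n))
      = of_int (cf_a \<alpha> (n + 2)) * (of_int (cf_q \<alpha> (Suc n)) * \<alpha> - (-1) ^ Suc n * cf_delta \<alpha> (Suc n))
        + (of_int (cf_q \<alpha> n) * \<alpha> - (-1) ^ n * cf_delta \<alpha> n)"
    using cf_delta_rec[OF "3.prems", of n] by (simp add: algebra_simps)
  also have "\<dots> \<in> \<int>" using 3 by simp
  finally show ?case .
qed

lemma dist_nint_cf_q:
  assumes "\<alpha> \<notin> \<rat>" and "cf_delta \<alpha> n < 1/2"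
  shows "dist_nint (of_int (cf_q \<alpha> n) * \<alpha>) = cf_delta \<alpha> n"
proof -
  obtain m where m: "of_int (cf_q \<alpha> n) * \<alpha> - (-1) ^ n * cf_delta \<alpha> n = of_int m"
    using cf_q_mult_sub_delta_Ints[OF assms(1), of n] Ints_cases by metis
  have abs: "\<bar>(-1) ^ n * cf_delta \<alpha> n\<bar> = cf_delta \<alpha> n"
    using cf_delta_pos[OF assms(1), of n] by (simp add: abs_mult)
  have "round (of_int (cf_q \<alpha> n) * \<alpha>) = m"
    by (rule round_unique') (use m abs assms(2) in \<open>simp add: algebra_simps\<close>)
  then show ?thesis unfolding dist_nint_def using m abs by (simp add: algebra_simps)
qed

lemma cf_q_Suc_delta_less_1:
  assumes "\<alpha> \<notin> \<rat>"
  shows "of_int (cf_q \<alpha> (Suc n)) * cf_delta \<alpha> n < 1"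
proof -
  have "0 < of_int (cf_q \<alpha> n) * cf_delta \<alpha> (Suc n)"
    using cf_q_ge_1[OF assms, of n] cf_delta_pos[OF assms, of "Suc n"] by simp
  then show ?thesis using cf_q_delta_identity[OF assms, of n] by linarith
qed

lemma cf_delta_less_half:
  assumes "\<alpha> \<notin> \<rat>" and "2 \<le> cf_q \<alpha> (Suc n)"
  shows "cf_delta \<alpha> n < 1/2"
proof -
  have "2 * cf_delta \<alpha> n \<le> of_int (cf_q \<alpha> (Suc n)) * cf_delta \<alpha> n"
    using assms(2) cf_delta_pos[OF assms(1), of n] by (intro mult_right_mono) auto
  then show ?thesis using cf_q_Suc_delta_less_1[OF assms(1), of n] by linarith
qed

lemma dist_nint_cf_q_Suc:
  assumes "\<alpha> \<notin> \<rat>"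
  shows "dist_nint (of_int (cf_q \<alpha> (Suc n)) * \<alpha>) = cf_delta \<alpha> (Suc n)"
  by (intro dist_nint_cf_q assms cf_delta_less_half cf_q_Suc_Suc_ge_2)

lemma cf_q_delta_less_1:
  assumes "\<alpha> \<notin> \<rat>"
  shows "of_int (cf_q \<alpha> n) * cf_delta \<alpha> n < 1"
proof -
  have "of_int (cf_q \<alpha> n) * cf_delta \<alpha> n \<le> of_int (cf_q \<alpha> (Suc n)) * cf_delta \<alpha> n"
    using cf_q_mono_Suc[OF assms, of n] cf_delta_pos[OF assms, of n] by (intro mult_right_mono) auto
  then show ?thesis using cf_q_Suc_delta_less_1[OF assms, of n] by linarith
qed

lemma cf_q_delta_Suc_less_half:
  assumes "\<alpha> \<notin> \<rat>"
  shows "of_int (cf_q \<alpha> n) * cf_delta \<alpha> (Suc n) < 1/2"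
proof -
  have "2 * real_of_int (cf_q \<alpha> n) \<le> of_int (cf_q \<alpha> (Suc (Suc n)))"
    using cf_q_Suc_Suc_ge[OF assms, of n] cf_q_mono_Suc[OF assms, of n] by linarith
  then have "2 * real_of_int (cf_q \<alpha> n) * cf_delta \<alpha> (Suc n)
      \<le> of_int (cf_q \<alpha> (Suc (Suc n))) * cf_delta \<alpha> (Suc n)"
    using cf_delta_pos[OF assms, of "Suc n"] by (intro mult_right_mono) auto
  then show ?thesis using cf_q_Suc_delta_less_1[OF assms, of "Suc n"] by linarith
qed

lemma cf_delta_le_twice:
  assumes "\<alpha> \<notin> \<rat>"
  shows "cf_delta \<alpha> n \<le> 2 * real_of_int (cf_a \<alpha> (n + 2)) * cf_delta \<alpha> (n + 1)"
proof -
  have "cf_delta \<alpha> (n + 1) \<le> cf_a \<alpha> (n + 2) * cf_delta \<alpha> (n + 1)"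
    using cf_a_Suc_ge_1[OF assms, of "Suc n"] cf_delta_pos[OF assms, of "n + 1"] by simp
  then show ?thesis
    using cf_delta_rec[OF assms, of n] cf_delta_Suc_less[OF assms, of "n + 1"]
    by (simp add: mult.commute)
qed

lemma cf_a_mult_q_delta_less_1:
  assumes "\<alpha> \<notin> \<rat>"
  shows "of_int (cf_a \<alpha> (n + 2)) * (of_int (cf_q \<alpha> (Suc n)) * cf_delta \<alpha> (Suc n))
    + of_int (cf_q \<alpha> n) * cf_delta \<alpha> (Suc n) < 1"
proof -
  let ?q = "real_of_int (cf_q \<alpha> (Suc n))"
  have "of_int (cf_a \<alpha> (n + 2)) * cf_delta \<alpha> (Suc n) < cf_delta \<alpha> n"
    using cf_delta_rec[OF assms, of n] cf_delta_pos[OF assms, of "n + 2"] by simp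
  then have "?q * (of_int (cf_a \<alpha> (n + 2)) * cf_delta \<alpha> (Suc n)) < ?q * cf_delta \<alpha> n"
    using cf_q_ge_1[OF assms, of "Suc n"] by simp
  then show ?thesis using cf_q_delta_identity[OF assms, of n] by (simp add: algebra_simps)
qed

lemma cf_q_delta_less_log_bound:
  assumes "\<alpha> \<notin> \<rat>" and log_bound: "ln (cf_a \<alpha> (Suc n)) / cf_a \<alpha> (Suc (Suc n)) \<le> T"
  shows "of_int (cf_q \<alpha> (Suc n)) * cf_delta \<alpha> (Suc n) < 1 - 1 / (exp T + 2)"
proof -
  define x where "x = of_int (cf_q \<alpha> (Suc n)) * cf_delta \<alpha> (Suc n)"
  define y where "y = of_int (cf_q \<alpha> n) * cf_delta \<alpha> (Suc n)"
  define a where "a = real_of_int (cf_a \<alpha> (Suc (Suc n)))"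
  have xy: "a * x + y < 1"
    using cf_a_mult_q_delta_less_1[OF assms(1), of n] unfolding x_def y_def a_def by simp
  have "0 < x" "0 < y"
    unfolding x_def y_def
    using cf_q_ge_1[OF assms(1), of n] cf_q_ge_1[OF assms(1), of "Suc n"]
      cf_delta_pos[OF assms(1), of "Suc n"]
    by simp_all
  have "x < 1 - 1 / (exp T + 2)"
  proof (cases "2 \<le> a")
    case True
    then have "2 * x \<le> a * x" using \<open>0 < x\<close> by (intro mult_right_mono) auto
    then have "x < 1/2" using xy \<open>0 < y\<close> by linarith
    moreover have "1 / (exp T + 2) \<le> 1/2"
      using exp_gt_zero[of T] by (simp add: divide_simps add_pos_pos)
    ultimately show ?thesis by linarith
  next
    case False
    then have "a = 1" unfolding a_def using cf_a_Suc_ge_1[OF assms(1), of "Suc n"] by simp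
    then have "ln (cf_a \<alpha> (Suc n)) \<le> T" using log_bound unfolding a_def by simp
    then have "cf_a \<alpha> (Suc n) \<le> exp T"
      using cf_a_Suc_ge_1[OF assms(1), of n]
      by (metis exp_le_cancel_iff exp_ln of_int_pos zero_less_one less_le_trans)
    then have "of_int (cf_q \<alpha> (Suc n)) \<le> (exp T + 1) * of_int (cf_q \<alpha> n)"
      using cf_q_Suc_le[OF assms(1), of n] cf_q_ge_1[OF assms(1), of n]
      by (smt (verit, best) mult_right_mono of_int_le_iff of_int_mult of_int_add of_int_1)
    then have "x \<le> (exp T + 1) * y"
      unfolding x_def y_def using cf_delta_pos[OF assms(1)] by (simp add: mult_right_mono mult.assoc)
    moreover have "(exp T + 1) * (x + y) < exp T + 1"
      using xy \<open>a = 1\<close> mult_strict_left_mono[of "x + y" 1 "exp T + 1"] by (simp add: add_pos_pos)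
    ultimately have "x * (exp T + 2) < exp T + 1" by (simp add: algebra_simps)
    moreover have "0 < exp T + 2" by (simp add: add_pos_pos)
    ultimately show ?thesis by (simp add: field_simps)
  qed
  then show ?thesis unfolding x_def .
qed

definition ost_tail :: "real \<Rightarrow> (nat \<Rightarrow> nat) \<Rightarrow> nat \<Rightarrow> nat \<Rightarrow> real" where
  "ost_tail \<alpha> b K m = (\<Sum>l\<in>{m..<K}. (-1) ^ (l - m) * real (b l) * cf_delta \<alpha> l)"

lemma ost_tail_Suc:
  assumes "\<forall>l\<ge>K. b l = 0"
  shows "ost_tail \<alpha> b K m = real (b m) * cf_delta \<alpha> m - ost_tail \<alpha> b K (Suc m)"
proof (cases "m < K")
  case True
  have "(\<Sum>l\<in>{Suc m..<K}. (-1) ^ (l - m) * real (b l) * cf_delta \<alpha> l)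
      = - (\<Sum>l\<in>{Suc m..<K}. (-1) ^ (l - Suc m) * real (b l) * cf_delta \<alpha> l)"
    unfolding sum_negf[symmetric]
  proof (rule sum.cong)
    fix l assume "l \<in> {Suc m..<K}"
    then have "l - m = Suc (l - Suc m)" by auto
    then show "(-1) ^ (l - m) * real (b l) * cf_delta \<alpha> l
        = - ((-1) ^ (l - Suc m) * real (b l) * cf_delta \<alpha> l)" by simp
  qed simp
  with True show ?thesis unfolding ost_tail_def by (simp add: sum.atLeast_Suc_lessThan)
next
  case False
  with assms show ?thesis unfolding ost_tail_def by simp
qed

lemma ost_tail_bounds:
  assumes "\<alpha> \<notin> \<rat>" and "\<forall>l\<ge>K. b l = 0" and "\<forall>l. int (b l) \<le> cf_a \<alpha> (l + 1)"
  shows "- cf_delta \<alpha> (Suc n) \<le> ost_tail \<alpha> b K (Suc n) \<and> ost_tail \<alpha> b K (Suc n) \<le> cf_delta \<alpha> n"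
proof (induction "K - n" arbitrary: n)
  case 0
  then have "ost_tail \<alpha> b K (Suc n) = 0" unfolding ost_tail_def by simp
  then show ?case using cf_delta_pos[OF assms(1)] by (simp add: less_imp_le)
next
  case (Suc x)
  then have IH: "- cf_delta \<alpha> (n + 2) \<le> ost_tail \<alpha> b K (n + 2) \<and> ost_tail \<alpha> b K (n + 2) \<le> cf_delta \<alpha> (n + 1)"
    using Suc.hyps(1)[of "Suc n"] by simp
  have "real (b (n + 1)) \<le> cf_a \<alpha> (n + 2)"
    using assms(3)[rule_format, of "n + 1"] by (simp add: numeral_2_eq_2)
  then have "real (b (n + 1)) * cf_delta \<alpha> (n + 1) \<le> cf_a \<alpha> (n + 2) * cf_delta \<alpha> (n + 1)"
    using cf_delta_pos[OF assms(1), of "n + 1"] by (intro mult_right_mono) auto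
  moreover have "0 \<le> real (b (n + 1)) * cf_delta \<alpha> (n + 1)"
    using cf_delta_pos[OF assms(1), of "n + 1"] by simp
  ultimately show ?case
    using ost_tail_Suc[OF assms(2), of \<alpha> "n + 1"] IH cf_delta_rec[OF assms(1), of n] by simp
qed

lemma ost_tail_upper_bound:
  assumes "\<alpha> \<notin> \<rat>" and "\<forall>l\<ge>K. b l = 0" and "\<forall>l. int (b l) \<le> cf_a \<alpha> (l + 1)"
  shows "ost_tail \<alpha> b K (Suc n)
    \<le> cf_delta \<alpha> n - (real_of_int (cf_a \<alpha> (n + 2)) - real (b (n + 1))) * cf_delta \<alpha> (n + 1)"
  using ost_tail_Suc[OF assms(2), of \<alpha> "Suc n"] ost_tail_bounds[OF assms, of "Suc n"]
    cf_delta_rec[OF assms(1), of n]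
  by (simp add: algebra_simps)

lemma ost_eps_eq_tail:
  assumes "\<alpha> \<notin> \<rat>"
  shows "ost_eps \<alpha> b K k = - real_of_int (cf_q \<alpha> k) * ost_tail \<alpha> b K (Suc k)"
proof -
  have "(\<Sum>l\<in>{k+1..<K}. (-1) ^ (k + l) * real (b l) * dist_nint (real_of_int (cf_q \<alpha> l) * \<alpha>))
      = (\<Sum>l\<in>{Suc k..<K}. - ((-1) ^ (l - Suc k) * real (b l) * cf_delta \<alpha> l))"
  proof (rule sum.cong)
    fix l assume l: "l \<in> {Suc k..<K}"
    then have "dist_nint (real_of_int (cf_q \<alpha> l) * \<alpha>) = cf_delta \<alpha> l"
      using dist_nint_cf_q_Suc[OF assms, of "l - 1"] by simp
    moreover have "(-1::real) ^ (k + l) = - ((-1) ^ (l - Suc k))"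
    proof -
      obtain m where "l = Suc k + m" using l le_Suc_ex[of "Suc k" l] by auto
      then show ?thesis by (simp add: power_add flip: power_mult_distrib)
    qed
    ultimately show "(-1) ^ (k + l) * real (b l) * dist_nint (real_of_int (cf_q \<alpha> l) * \<alpha>)
        = - ((-1) ^ (l - Suc k) * real (b l) * cf_delta \<alpha> l)" by simp
  qed simp
  then show ?thesis unfolding ost_eps_def ost_tail_def by (simp add: sum_negf)
qed

lemma ostrowski_coeff_le:
  assumes "ostrowski \<alpha> N b K"
  shows "real (b (k + 1)) \<le> real_of_int (cf_a \<alpha> (k + 2))"
proof -
  have "int (b (k + 1)) \<le> cf_a \<alpha> (k + 2)"
    using assms unfolding ostrowski_def by (simp add: numeral_2_eq_2)
  then show ?thesis by (metis of_int_le_iff of_int_of_nat_eq)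
qed

lemma ostrowski_coeff_less:
  assumes "ostrowski \<alpha> N b K" and "1 \<le> b k"
  shows "real (b (k + 1)) + 1 \<le> real_of_int (cf_a \<alpha> (k + 2))"
proof -
  have "int (b (k + 1)) \<le> cf_a \<alpha> (k + 2)" "int (b (k + 1)) \<noteq> cf_a \<alpha> (k + 2)"
    using assms unfolding ostrowski_def by (auto simp: numeral_2_eq_2)
  then show ?thesis by linarith
qed

lemma ostrowski_cf_q_Suc_ge_2:
  assumes "\<alpha> \<notin> \<rat>" and "ostrowski \<alpha> N b K" and "1 \<le> b k"
  shows "2 \<le> cf_q \<alpha> (Suc k)"
proof (cases k)
  case 0
  with assms(2,3) show ?thesis unfolding ostrowski_def by simp
next
  case (Suc j)
  then show ?thesis using cf_q_Suc_Suc_ge_2[OF assms(1), of j] by simp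
qed

lemma ost_eps_bounds:
  assumes "\<alpha> \<notin> \<rat>" and "ostrowski \<alpha> N b K"
  shows "- of_int (cf_q \<alpha> k) * cf_delta \<alpha> k
      + of_int (cf_q \<alpha> k) * (of_int (cf_a \<alpha> (k + 2)) - real (b (k + 1))) * cf_delta \<alpha> (k + 1)
      \<le> ost_eps \<alpha> b K k"
    and "ost_eps \<alpha> b K k \<le> of_int (cf_q \<alpha> k) * cf_delta \<alpha> (k + 1)"
proof -
  from assms(2) have vanish: "\<forall>l\<ge>K. b l = 0" and coeff_le: "\<forall>l. int (b l) \<le> cf_a \<alpha> (l + 1)"
    unfolding ostrowski_def by auto
  have q_pos: "0 \<le> real_of_int (cf_q \<alpha> k)" using cf_q_ge_1[OF assms(1), of k] by simp
  note eps = ost_eps_eq_tail[OF assms(1)]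
  show "- of_int (cf_q \<alpha> k) * cf_delta \<alpha> k
      + of_int (cf_q \<alpha> k) * (of_int (cf_a \<alpha> (k + 2)) - real (b (k + 1))) * cf_delta \<alpha> (k + 1)
      \<le> ost_eps \<alpha> b K k"
    using mult_left_mono[OF ost_tail_upper_bound[OF assms(1) vanish coeff_le, of k] q_pos]
    unfolding eps by (simp add: algebra_simps)
  show "ost_eps \<alpha> b K k \<le> of_int (cf_q \<alpha> k) * cf_delta \<alpha> (k + 1)"
    using mult_left_mono[OF conjunct1[OF ost_tail_bounds[OF assms(1) vanish coeff_le, of k]] q_pos]
    unfolding eps by simp
qed

lemma ost_eps_lower_bound_small_coeff:
  assumes "\<alpha> \<notin> \<rat>" and "ostrowski \<alpha> N b K"
    and "0 < \<delta>" and "real (b (k + 1)) \<le> (1 - \<delta>) * of_int (cf_a \<alpha> (k + 2))"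
  shows "- (1 - \<delta> / 3) * of_int (cf_q \<alpha> k) * cf_delta \<alpha> k \<le> ost_eps \<alpha> b K k"
proof -
  let ?q = "real_of_int (cf_q \<alpha> k)" and ?a = "real_of_int (cf_a \<alpha> (k + 2))"
  have "cf_delta \<alpha> k / 3 \<le> ?a * cf_delta \<alpha> (k + 1)"
    using cf_delta_le_twice[OF assms(1), of k] cf_delta_pos[OF assms(1), of k] by simp
  then have "\<delta> / 3 * cf_delta \<alpha> k \<le> \<delta> * ?a * cf_delta \<alpha> (k + 1)"
    using mult_left_mono[of _ _ \<delta>] assms(3) by (simp add: mult.assoc)
  also have "\<dots> \<le> (?a - real (b (k + 1))) * cf_delta \<alpha> (k + 1)"
    using assms(4) cf_delta_pos[OF assms(1), of "k + 1"] by (intro mult_right_mono) (auto simp: algebra_simps)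
  finally have "?q * (\<delta> / 3 * cf_delta \<alpha> k) \<le> ?q * ((?a - real (b (k + 1))) * cf_delta \<alpha> (k + 1))"
    using cf_q_ge_1[OF assms(1), of k] by (intro mult_left_mono) auto
  then show ?thesis using ost_eps_bounds(1)[OF assms(1,2), of k] by (simp add: algebra_simps)
qed

lemma ost_eps_lower_bound_log:
  assumes "\<alpha> \<notin> \<rat>" and "ostrowski \<alpha> N b K"
    and "1 \<le> k" and "ln (cf_a \<alpha> k) / cf_a \<alpha> (k + 1) \<le> T"
  shows "- (1 - 1 / (exp T + 2)) \<le> ost_eps \<alpha> b K k"
proof -
  obtain j where k: "k = Suc j" using assms(3) by (cases k) auto
  have "0 \<le> of_int (cf_q \<alpha> k) * (of_int (cf_a \<alpha> (k + 2)) - real (b (k + 1))) * cf_delta \<alpha> (k + 1)"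
    using ostrowski_coeff_le[OF assms(2), of k] cf_q_ge_1[OF assms(1), of k] cf_delta_pos[OF assms(1), of "k + 1"]
    by simp
  moreover have "of_int (cf_q \<alpha> k) * cf_delta \<alpha> k < 1 - 1 / (exp T + 2)"
    using cf_q_delta_less_log_bound[OF assms(1), of j T] assms(4) unfolding k by simp
  ultimately show ?thesis using ost_eps_bounds(1)[OF assms(1,2), of k] by linarith
qed

theorem lemma1:
  fixes \<alpha> :: real and N :: nat and b :: "nat \<Rightarrow> nat" and K :: nat and k :: nat
  assumes irr: "\<alpha> \<notin> \<rat>"
    and ost: "ostrowski \<alpha> N b K"
    and bk: "b k \<ge> 1"
  shows "(let qk = real_of_int (cf_q \<alpha> k);
              A = - qk * dist_nint (qk * \<alpha>) + qk * dist_nint (real_of_int (cf_q \<alpha> (k + 1)) * \<alpha>);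
              B = qk * dist_nint (real_of_int (cf_q \<alpha> (k + 1)) * \<alpha>)
          in -1 < A \<and> A \<le> ost_eps \<alpha> b K k \<and> ost_eps \<alpha> b K k \<le> B \<and> B < 1 / 2)
    \<and> (\<forall>\<delta>::real. \<delta> > 0 \<longrightarrow> real (b (k + 1)) \<le> (1 - \<delta>) * real_of_int (cf_a \<alpha> (k + 2)) \<longrightarrow>
          ost_eps \<alpha> b K k \<ge> - (1 - \<delta> / 3) * real_of_int (cf_q \<alpha> k) * dist_nint (real_of_int (cf_q \<alpha> k) * \<alpha>))
    \<and> (\<forall>(k0::nat) (T::real). k0 \<ge> 1 \<longrightarrow> T \<ge> 1 \<longrightarrow>
          (\<forall>j\<ge>k0. ln (real_of_int (cf_a \<alpha> j)) / real_of_int (cf_a \<alpha> (j + 1)) \<le> T) \<longrightarrow>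
          k \<ge> k0 \<longrightarrow> ost_eps \<alpha> b K k \<ge> - (1 - 1 / (exp T + 2)))"
proof -
  let ?q = "real_of_int (cf_q \<alpha> k)" and ?d = "cf_delta \<alpha> k" and ?d' = "cf_delta \<alpha> (k + 1)"
  have dist: "dist_nint (?q * \<alpha>) = ?d" "dist_nint (of_int (cf_q \<alpha> (k + 1)) * \<alpha>) = ?d'"
    using dist_nint_cf_q[OF irr cf_delta_less_half[OF irr ostrowski_cf_q_Suc_ge_2[OF irr ost bk]]]
      dist_nint_cf_q_Suc[OF irr, of k]
    by simp_all
  have "?q * ?d' \<le> ?q * (of_int (cf_a \<alpha> (k + 2)) - real (b (k + 1))) * ?d'"
    using ostrowski_coeff_less[OF ost bk] cf_q_ge_1[OF irr, of k] cf_delta_pos[OF irr, of "k + 1"]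
    by (simp add: mult_left_mono mult_right_mono mult.assoc)
  moreover have "?q * ?d < 1" "0 < ?q * ?d'" "?q * ?d' < 1/2"
    using cf_q_delta_less_1[OF irr] cf_q_ge_1[OF irr, of k] cf_delta_pos[OF irr]
      cf_q_delta_Suc_less_half[OF irr, of k]
    by simp_all
  ultimately show ?thesis
    unfolding Let_def dist
    using ost_eps_bounds[OF irr ost, of k] ost_eps_lower_bound_small_coeff[OF irr ost]
      ost_eps_lower_bound_log[OF irr ost, of k]
    by auto
qed

end
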